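(* Let $(A,\succ,\prec)$ be a Leibniz-dendriform algebra and $r\in A\otimes A$ such that $S(r)=0$ and $r+\tau(r)$ is invariant (so $(A,\succ,\prec,\Delta_{\succ,r},\Delta_{\prec,r})$ is quasi-triangular). Then $\tau(r)$ also satisfies $S(\tau(r))=0$ and $\tau(r)+\tau(\tau(r))$ is invariant, so $(A,\succ,\prec,\Delta_{\succ,\tau(r)},\Delta_{\prec,\tau(r)})$ is quasi-triangular. If moreover $T_{r+\tau(r)}$ is a linear isomorphism (factorizable case), then so is $T_{\tau(r)+r}$, so the latter bialgebra is factorizable as well.
   Context: $\langle\cdot,\cdot\rangle$ is the natural pairing, $I$ the identity, $\tau(a\otimes b)=b\otimes a$. A Leibniz-dendriform algebra is a vector space $A$ with bilinear operations $\succ,\prec$ such that, with $x\circ y:=x\succ y+x\prec y$, for all $x,y,z$: $(x\circ y)\succ z=x\succ(y\succ z)-y\succ(x\succ z)$, $y\prec(x\circ z)+(x\succ y)\prec z=x\succ(y\prec z)$, $x\prec(y\circ z)=(x\prec y)\prec z+y\succ(x\prec z)$. Write $x\odot y:=x\succ y+y\prec x$, $x\star y:=x\circ y+y\circ x$; $L_*(x)y=x*y$, $R_*(x)y=y*x$; $L_\odot:=L_\succ+R_\prec$, $L_\star:=L_\circ+R_\circ$. For $r=\sum_ia_i\otimes b_i$: $T_r:A^*\to A$, $\langle T_r(\zeta),\eta\rangle=\langle r,\zeta\otimes\eta\rangle$; $S(r):=\sum_{i,j}\big(a_i\otimes a_j\otimes (b_j\circ b_i)-a_i\otimes (b_i\odot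 a_j)\otimes b_j-(a_i\succ a_j)\otimes b_i\otimes b_j\big)$. $s\in A\otimes A$ is invariant if for all $x$: $(L_\odot(x)\otimes I-I\otimes R_\circ(x))s=0$ and $(L_\star(x)\otimes I-I\otimes R_\prec(x))\tau(s)=0$. Coboundary maps: $\Delta_{\succ,r}(x)=(L_\odot(x)\otimes I-I\otimes R_\circ(x))r$, $\Delta_{\prec,r}(x)=(L_\star(x)\otimes I-I\otimes R_\prec(x))\tau(r)$. The bialgebra $(A,\succ,\prec,\Delta_{\succ,r},\Delta_{\prec,r})$ is called quasi-triangular if $S(r)=0$ and $r+\tau(r)$ is invariant, and factorizable if in addition $T_{r+\tau(r)}:A^*\to A$ is a linear isomorphism. *)

theory Defs
  imports Main
begin

text \<open>Finite-dimensional vector space A = 'k^'i (functions 'i => 'k, 'i a finite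
  index type, 'k a field), with standard basis. Tensors in A (x) A and A (x) A (x) A
  are represented by their coefficient arrays w.r.t. the basis.\<close>

type_synonym ('i,'k) vec = "'i \<Rightarrow> 'k"
type_synonym ('i,'k) tens2 = "'i \<Rightarrow> 'i \<Rightarrow> 'k"
type_synonym ('i,'k) tens3 = "'i \<Rightarrow> 'i \<Rightarrow> 'i \<Rightarrow> 'k"
type_synonym ('i,'k) op = "('i,'k) vec \<Rightarrow> ('i,'k) vec \<Rightarrow> ('i,'k) vec"

definition bvec :: "'i \<Rightarrow> ('i,'k::field) vec" where
  "bvec p = (\<lambda>q. if q = p then 1 else 0)"

definition vadd :: "('i,'k::field) vec \<Rightarrow> ('i,'k) vec \<Rightarrow> ('i,'k) vec" where
  "vadd x y = (\<lambda>i. x i + y i)"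

definition vscale :: "'k::field \<Rightarrow> ('i,'k) vec \<Rightarrow> ('i,'k) vec" where
  "vscale c x = (\<lambda>i. c * x i)"

definition bilinear_op :: "('i,'k::field) op \<Rightarrow> bool" where
  "bilinear_op m \<longleftrightarrow>
     (\<forall>x y z. m (vadd x y) z = vadd (m x z) (m y z)) \<and>
     (\<forall>x y z. m x (vadd y z) = vadd (m x y) (m x z)) \<and>
     (\<forall>c x y. m (vscale c x) y = vscale c (m x y)) \<and>
     (\<forall>c x y. m x (vscale c y) = vscale c (m x y))"

definition circ :: "('i,'k::field) op \<Rightarrow> ('i,'k) op \<Rightarrow> ('i,'k) op" where
  "circ sc pr x y = vadd (sc x y) (pr x y)"

definition odot :: "('i,'k::field) op \<Rightarrow> ('i,'k) op \<Rightarrow> ('i,'k) op" where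
  "odot sc pr x y = vadd (sc x y) (pr y x)"

definition star :: "('i,'k::field) op \<Rightarrow> ('i,'k) op \<Rightarrow> ('i,'k) op" where
  "star sc pr x y = vadd (circ sc pr x y) (circ sc pr y x)"

definition leibniz_dendriform :: "('i,'k::field) op \<Rightarrow> ('i,'k) op \<Rightarrow> bool" where
  "leibniz_dendriform sc pr \<longleftrightarrow> bilinear_op sc \<and> bilinear_op pr \<and>
    (\<forall>x y z. sc (circ sc pr x y) z = (\<lambda>i. sc x (sc y z) i - sc y (sc x z) i)) \<and>
    (\<forall>x y z. vadd (pr y (circ sc pr x z)) (pr (sc x y) z) = sc x (pr y z)) \<and>
    (\<forall>x y z. pr x (circ sc pr y z) = vadd (pr (pr x y) z) (sc y (pr x z)))"

text \<open>(f (x) g) t for linear maps f, g on A and t in A (x) A.\<close>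
definition tmap :: "(('i::finite,'k::field) vec \<Rightarrow> ('i,'k) vec) \<Rightarrow> (('i,'k) vec \<Rightarrow> ('i,'k) vec)
    \<Rightarrow> ('i,'k) tens2 \<Rightarrow> ('i,'k) tens2" where
  "tmap f g t = (\<lambda>a b. \<Sum>p\<in>UNIV. \<Sum>q\<in>UNIV. t p q * f (bvec p) a * g (bvec q) b)"

definition tau :: "('i,'k) tens2 \<Rightarrow> ('i,'k) tens2" where
  "tau t = (\<lambda>p q. t q p)"

definition tadd :: "('i,'k::field) tens2 \<Rightarrow> ('i,'k) tens2 \<Rightarrow> ('i,'k) tens2" where
  "tadd s t = (\<lambda>p q. s p q + t p q)"

definition tsub :: "('i,'k::field) tens2 \<Rightarrow> ('i,'k) tens2 \<Rightarrow> ('i,'k) tens2" where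
  "tsub s t = (\<lambda>p q. s p q - t p q)"

text \<open>S(r), with r = sum_{p,q} r p q e_p (x) e_q, written out in coordinates:
  sum_{i,j} a_i (x) a_j (x) (b_j o b_i) - a_i (x) (b_i odot a_j) (x) b_j - (a_i > a_j) (x) b_i (x) b_j.\<close>
definition S_op :: "('i::finite,'k::field) op \<Rightarrow> ('i,'k) op \<Rightarrow> ('i,'k) tens2 \<Rightarrow> ('i,'k) tens3" where
  "S_op sc pr r = (\<lambda>a b c.
      (\<Sum>p\<in>UNIV. \<Sum>q\<in>UNIV. \<Sum>s\<in>UNIV. \<Sum>t\<in>UNIV.
         r p q * r s t *
         (bvec p a * bvec s b * circ sc pr (bvec t) (bvec q) c
          - bvec p a * odot sc pr (bvec q) (bvec s) b * bvec t c
          - sc (bvec p) (bvec s) a * bvec q b * bvec t c)))"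

definition invariant :: "('i::finite,'k::field) op \<Rightarrow> ('i,'k) op \<Rightarrow> ('i,'k) tens2 \<Rightarrow> bool" where
  "invariant sc pr s \<longleftrightarrow> (\<forall>x.
     tsub (tmap (odot sc pr x) id s) (tmap id (\<lambda>y. circ sc pr y x) s) = (\<lambda>_ _. 0) \<and>
     tsub (tmap (star sc pr x) id (tau s)) (tmap id (\<lambda>y. pr y x) (tau s)) = (\<lambda>_ _. 0))"

text \<open>T_r : A^* -> A, with A^* identified with coordinate functionals via the
  natural pairing <zeta, x> = sum_i zeta i * x i.\<close>
definition T_map :: "('i::finite,'k::field) tens2 \<Rightarrow> ('i,'k) vec \<Rightarrow> ('i,'k) vec" where
  "T_map r \<zeta> = (\<lambda>q. \<Sum>p\<in>UNIV. r p q * \<zeta> p)"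

definition quasi_triangular :: "('i::finite,'k::field) op \<Rightarrow> ('i,'k) op \<Rightarrow> ('i,'k) tens2 \<Rightarrow> bool" where
  "quasi_triangular sc pr r \<longleftrightarrow> S_op sc pr r = (\<lambda>_ _ _. 0) \<and> invariant sc pr (tadd r (tau r))"

definition factorizable :: "('i::finite,'k::field) op \<Rightarrow> ('i,'k) op \<Rightarrow> ('i,'k) tens2 \<Rightarrow> bool" where
  "factorizable sc pr r \<longleftrightarrow> quasi_triangular sc pr r \<and> bij (T_map (tadd r (tau r)))"

end

theory Submission
  imports Defs
begin

text \<open>
  Expanding both sides in the standard basis gives the identity
  \<open>S(\<tau>r)\<^sub>a\<^sub>b\<^sub>c = S(r)\<^sub>a\<^sub>c\<^sub>b + S(r)\<^sub>c\<^sub>a\<^sub>b - S(r)\<^sub>c\<^sub>b\<^sub>a + (r contracted with the invariance defects of r + \<tau>r)\<close>,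
  valid for arbitrary operations \<open>\<succ>, \<prec>\<close>. Hence \<open>S(r) = 0\<close> and the invariance of
  \<open>r + \<tau>r\<close> force \<open>S(\<tau>r) = 0\<close>. The symmetric part \<open>r + \<tau>r\<close> is unchanged by
  \<open>r \<mapsto> \<tau>r\<close>, so its invariance and the bijectivity of \<open>T\<^bsub>r+\<tau>r\<^esub>\<close> carry over.
\<close>

lemma bvec_times: "bvec p a * x = (if p = a then x else 0)"
  by (simp add: bvec_def)

lemma times_bvec: "x * bvec p a = (if p = a then x else 0)"
  by (simp add: bvec_def)

lemma if_zero_times: "(if P then x else 0) * (y::'a::mult_zero) = (if P then x * y else 0)"
  by simp

lemma times_if_zero: "(y::'a::mult_zero) * (if P then x else 0) = (if P then y * x else 0)"
  by simp

lemma sum_if_const_cond: "(\<Sum>q\<in>A. if P then f q else 0) = (if P then (\<Sum>q\<in>A. f q) else 0)"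
  by simp

lemma tau_tau [simp]: "tau (tau r) = r"
  by (simp add: tau_def)

lemma tadd_commute: "tadd s t = tadd t s"
  by (simp add: tadd_def add.commute)

lemma tmap_id_right: "tmap f id s a b = (\<Sum>p\<in>UNIV. s p b * f (bvec p) a)"
  by (simp add: tmap_def times_bvec if_zero_times sum_if_const_cond)

lemma tmap_id_left: "tmap id g s a b = (\<Sum>q\<in>UNIV. s a q * g (bvec q) b)"
  by (simp add: tmap_def times_bvec if_zero_times sum_if_const_cond)

text \<open>The outer summation index of the last two sums is chosen so that the proof of
  \<open>S_op_tau\<close> needs as few exchanges of summation indices as possible.\<close>

lemma S_op_coord:
  fixes sc pr :: "('i::finite, 'k::field) op"
  shows "S_op sc pr r a b c =
     (\<Sum>x\<in>UNIV. \<Sum>y\<in>UNIV. r a x * r b y * circ sc pr (bvec y) (bvec x) c)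
   - (\<Sum>y\<in>UNIV. \<Sum>x\<in>UNIV. r a x * r y c * odot sc pr (bvec x) (bvec y) b)
   - (\<Sum>y\<in>UNIV. \<Sum>x\<in>UNIV. r x b * r y c * sc (bvec x) (bvec y) a)"
  unfolding S_op_def right_diff_distrib sum_subtractf
  by (simp add: mult.assoc bvec_times times_bvec if_zero_times times_if_zero sum_if_const_cond)
    (subst (1 2) sum.swap, rule refl)

definition odot_circ_defect ::
    "('i::finite,'k::field) op \<Rightarrow> ('i,'k) op \<Rightarrow> ('i,'k) tens2 \<Rightarrow> ('i,'k) vec \<Rightarrow> ('i,'k) tens2" where
  "odot_circ_defect sc pr s x = tsub (tmap (odot sc pr x) id s) (tmap id (\<lambda>y. circ sc pr y x) s)"

definition star_prec_defect ::
    "('i::finite,'k::field) op \<Rightarrow> ('i,'k) op \<Rightarrow> ('i,'k) tens2 \<Rightarrow> ('i,'k) vec \<Rightarrow> ('i,'k) tens2" where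
  "star_prec_defect sc pr s x = tsub (tmap (star sc pr x) id (tau s)) (tmap id (\<lambda>y. pr y x) (tau s))"

lemma invariant_iff_defects:
  "invariant sc pr s \<longleftrightarrow>
     (\<forall>x. odot_circ_defect sc pr s x = (\<lambda>_ _. 0) \<and> star_prec_defect sc pr s x = (\<lambda>_ _. 0))"
  by (simp add: invariant_def odot_circ_defect_def star_prec_defect_def)

lemma odot_circ_defect_coord:
  "odot_circ_defect sc pr s x a b =
     (\<Sum>p\<in>UNIV. s p b * odot sc pr x (bvec p) a) - (\<Sum>q\<in>UNIV. s a q * circ sc pr (bvec q) x b)"
  by (simp add: odot_circ_defect_def tsub_def tmap_id_right tmap_id_left)

lemma star_prec_defect_coord:
  "star_prec_defect sc pr s x a b =
     (\<Sum>p\<in>UNIV. s b p * star sc pr x (bvec p) a) - (\<Sum>q\<in>UNIV. s q a * pr (bvec q) x b)"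
  by (simp add: star_prec_defect_def tsub_def tmap_id_right tmap_id_left tau_def)

lemma S_op_tau:
  fixes sc pr :: "('i::finite, 'k::field) op" and r :: "('i,'k) tens2"
  defines "w \<equiv> tadd r (tau r)"
  shows "S_op sc pr (tau r) a b c =
      S_op sc pr r a c b + S_op sc pr r c a b - S_op sc pr r c b a
    - (\<Sum>t\<in>UNIV. r t b * odot_circ_defect sc pr w (bvec t) c a)
    + (\<Sum>t\<in>UNIV. r t b * star_prec_defect sc pr w (bvec t) c a)
    - (\<Sum>t\<in>UNIV. r c t * star_prec_defect sc pr w (bvec t) b a)"
proof -
  \<comment> \<open>the terms of the expansion that cancel only after exchanging the two summation indices\<close>
  define Q where "Q x y =
      r x a * r y b * pr (bvec y) (bvec x) c + r x b * r c y * pr (bvec x) (bvec y) a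
    - r a x * r c y * circ sc pr (bvec y) (bvec x) b - r x a * r c y * odot sc pr (bvec y) (bvec x) b"
    for x y
  have "S_op sc pr (tau r) a b c - (S_op sc pr r a c b + S_op sc pr r c a b - S_op sc pr r c b a
    - (\<Sum>t\<in>UNIV. r t b * odot_circ_defect sc pr w (bvec t) c a)
    + (\<Sum>t\<in>UNIV. r t b * star_prec_defect sc pr w (bvec t) c a)
    - (\<Sum>t\<in>UNIV. r c t * star_prec_defect sc pr w (bvec t) b a))
    = (\<Sum>x\<in>UNIV. \<Sum>y\<in>UNIV. Q x y - Q y x)"
    unfolding S_op_coord odot_circ_defect_coord star_prec_defect_coord
    unfolding right_diff_distrib sum_distrib_left sum_subtractf[symmetric] sum.distrib[symmetric]
    by (intro sum.cong refl)
      (simp add: Q_def w_def tau_def tadd_def circ_def odot_def star_def vadd_def algebra_simps)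
  also have "\<dots> = 0"
    by (simp add: sum_subtractf sum.swap[of Q])
  finally show ?thesis by simp
qed

lemma quasi_triangular_tau:
  fixes sc pr :: "('i::finite, 'k::field) op" and r :: "('i,'k) tens2"
  assumes "quasi_triangular sc pr r"
  shows "quasi_triangular sc pr (tau r)"
proof -
  from assms have "S_op sc pr r = (\<lambda>_ _ _. 0)" and inv: "invariant sc pr (tadd r (tau r))"
    unfolding quasi_triangular_def by auto
  then have "S_op sc pr (tau r) a b c = 0" for a b c
    by (simp add: S_op_tau invariant_iff_defects)
  with inv show ?thesis
    by (simp add: quasi_triangular_def tadd_commute fun_eq_iff)
qed

lemma factorizable_tau:
  fixes sc pr :: "('i::finite, 'k::field) op" and r :: "('i,'k) tens2"
  assumes "factorizable sc pr r"
  shows "factorizable sc pr (tau r)"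
  using assms by (simp add: factorizable_def quasi_triangular_tau tadd_commute)

theorem mainTheorem9:
  fixes sc pr :: "('i::finite, 'k::field) op" and r :: "('i,'k) tens2"
  assumes "leibniz_dendriform sc pr"
    and "quasi_triangular sc pr r"
  shows "quasi_triangular sc pr (tau r)
         \<and> (factorizable sc pr r \<longrightarrow> factorizable sc pr (tau r))"
  using assms(2) quasi_triangular_tau factorizable_tau by blast

end
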